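(* Let $1\le p,q<\infty$, let $\nu$ be a modulus of variation, $\phi$ an Orlicz function and $w=\{w_j\}$ a weight sequence. Then (i) $\ell_\phi\hookrightarrow m(\nu,p)$ iff $\limsup_{n\to\infty}\frac1{\nu(n)}\max_{1\le k\le n}k^{1/p}\phi^{-1}(1/k)<\infty$; (ii) $d(w,q)\hookrightarrow m(\nu,p)$ iff $\limsup_{n\to\infty}\frac1{\nu(n)}\max_{1\le k\le n}k^{1/p}\big(\sum_{j=1}^kw_j\big)^{-1/q}<\infty$.
   Context: A modulus of variation is a nondecreasing concave sequence of positive numbers. An Orlicz function is a continuous convex $\phi$ on $[0,\infty)$ with $\phi(x)>0$ for $x>0$, $\phi(x)/x\to0$ as $x\to0^+$ and $\phi(x)/x\to\infty$ as $x\to\infty$. A weight sequence is a nonincreasing sequence of positive numbers belonging to $c_0\setminus\ell_1$. For a real sequence $x$, $x^*$ is the nonincreasing rearrangement of $\{|x_j|\}$. $\ell_\phi$: sequences with $\|x\|=\inf\{c>0:\sum_j\phi(|x_j|/c)\le1\}<\infty$. $d(w,q)$: sequences with $\|x\|=(\sum_j(x_j^* )^qw_j)^{1/q}<\infty$. $m(\nu,p)$: sequences with $\|x\|=\sup_{n}\frac1{\nu(n)}(\sum_{j=1}^n(x_j^* )^p)^{1/p}<\infty$. *)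

theory Defs
  imports "HOL-Analysis.Analysis"
begin

text \<open>Conventions: real sequences are functions nat => real; the paper's index j >= 1
  corresponds to the Isabelle index j - 1 (so x_1 is x 0). The modulus of variation nu is
  indexed as in the paper, i.e. only its values at n >= 1 matter.\<close>

definition modulus_of_variation :: "(nat \<Rightarrow> real) \<Rightarrow> bool" where
  "modulus_of_variation \<nu> \<longleftrightarrow>
     (\<forall>n\<ge>1. 0 < \<nu> n) \<and> (\<forall>n\<ge>1. \<nu> n \<le> \<nu> (Suc n)) \<and>
     (\<forall>n\<ge>1. \<nu> n + \<nu> (n + 2) \<le> 2 * \<nu> (Suc n))"

definition orlicz_function :: "(real \<Rightarrow> real) \<Rightarrow> bool" where
  "orlicz_function \<phi> \<longleftrightarrow>
     continuous_on {0..} \<phi> \<and> convex_on {0..} \<phi> \<and> (\<forall>x>0. \<phi> x > 0) \<and>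
     ((\<lambda>x. \<phi> x / x) \<longlongrightarrow> 0) (at_right 0) \<and>
     filterlim (\<lambda>x. \<phi> x / x) at_top at_top"

definition weight_sequence :: "(nat \<Rightarrow> real) \<Rightarrow> bool" where
  "weight_sequence w \<longleftrightarrow> (\<forall>j. 0 < w j) \<and> decseq w \<and> w \<longlonglongrightarrow> 0 \<and> \<not> summable w"

definition orlicz_inv :: "(real \<Rightarrow> real) \<Rightarrow> real \<Rightarrow> real" where
  "orlicz_inv \<phi> = inv_into {0..} \<phi>"

text \<open>Nonincreasing rearrangement (0-based: decr_rearr x n is the paper's x*_(n+1)),
  x*_(n+1) = inf { t >= 0 : #{j. |x_j| > t} <= n }, meaningful for bounded x.\<close>
definition decr_rearr :: "(nat \<Rightarrow> real) \<Rightarrow> nat \<Rightarrow> real" where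
  "decr_rearr x n = Inf {t. 0 \<le> t \<and> finite {j. \<bar>x j\<bar> > t} \<and> card {j. \<bar>x j\<bar> > t} \<le> n}"

definition in_orlicz :: "(real \<Rightarrow> real) \<Rightarrow> (nat \<Rightarrow> real) \<Rightarrow> bool" where
  "in_orlicz \<phi> x \<longleftrightarrow> (\<exists>c>0. summable (\<lambda>j. \<phi> (\<bar>x j\<bar> / c)) \<and> (\<Sum>j. \<phi> (\<bar>x j\<bar> / c)) \<le> 1)"

definition orlicz_norm :: "(real \<Rightarrow> real) \<Rightarrow> (nat \<Rightarrow> real) \<Rightarrow> real" where
  "orlicz_norm \<phi> x = Inf {c. c > 0 \<and> summable (\<lambda>j. \<phi> (\<bar>x j\<bar> / c)) \<and> (\<Sum>j. \<phi> (\<bar>x j\<bar> / c)) \<le> 1}"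

definition in_lorentz :: "(nat \<Rightarrow> real) \<Rightarrow> real \<Rightarrow> (nat \<Rightarrow> real) \<Rightarrow> bool" where
  "in_lorentz w q x \<longleftrightarrow> bounded (range x) \<and> summable (\<lambda>j. decr_rearr x j powr q * w j)"

definition lorentz_norm :: "(nat \<Rightarrow> real) \<Rightarrow> real \<Rightarrow> (nat \<Rightarrow> real) \<Rightarrow> real" where
  "lorentz_norm w q x = (\<Sum>j. decr_rearr x j powr q * w j) powr (1 / q)"

definition mseq_term :: "(nat \<Rightarrow> real) \<Rightarrow> real \<Rightarrow> (nat \<Rightarrow> real) \<Rightarrow> nat \<Rightarrow> real" where
  "mseq_term \<nu> p x n = (\<Sum>j<n. decr_rearr x j powr p) powr (1 / p) / \<nu> n"

definition in_marc :: "(nat \<Rightarrow> real) \<Rightarrow> real \<Rightarrow> (nat \<Rightarrow> real) \<Rightarrow> bool" where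
  "in_marc \<nu> p x \<longleftrightarrow> bounded (range x) \<and> bdd_above (mseq_term \<nu> p x ` {1..})"

definition marc_norm :: "(nat \<Rightarrow> real) \<Rightarrow> real \<Rightarrow> (nat \<Rightarrow> real) \<Rightarrow> real" where
  "marc_norm \<nu> p x = (SUP n\<in>{1..}. mseq_term \<nu> p x n)"

definition embeds ::
  "((nat \<Rightarrow> real) \<Rightarrow> bool) \<Rightarrow> ((nat \<Rightarrow> real) \<Rightarrow> real) \<Rightarrow>
   ((nat \<Rightarrow> real) \<Rightarrow> bool) \<Rightarrow> ((nat \<Rightarrow> real) \<Rightarrow> real) \<Rightarrow> bool" where
  "embeds X nX Y nY \<longleftrightarrow> (\<exists>C. \<forall>x. X x \<longrightarrow> Y x \<and> nY x \<le> C * nX x)"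

end

theory Submission
  imports Defs
begin

text \<open>
  Necessity: test the embedding on the vectors \<open>a\<close> times the indicator of \<open>[0, k)\<close>. For
  \<open>n \<ge> k\<close> their Marcinkiewicz norm is at least \<open>k\<^sup>1\<^sup>/\<^sup>p a / \<nu>(n)\<close>, while for
  \<open>a = \<phi>\<^sup>-\<^sup>1(1/k)\<close> their Luxemburg norm is at most 1 and for \<open>a = 1\<close> their Lorentz norm is
  \<open>W\<^sub>k\<^sup>1\<^sup>/\<^sup>q\<close>, where \<open>W\<^sub>k\<close> is the \<open>k\<close>-th partial sum of \<open>w\<close>.

  Sufficiency: bound \<open>\<Sum>\<^sub>j\<^sub><\<^sub>n (x*\<^sub>j)\<^sup>p\<close> by a constant times \<open>\<nu>(n)\<^sup>p \<parallel>x\<parallel>\<^sup>p\<close>.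
  For \<open>\<ell>\<^sub>\<phi>\<close>, let \<open>c\<close> be admissible for the Luxemburg norm of \<open>x\<close> and \<open>b\<^sub>j = \<phi>(x*\<^sub>j / c)\<close>.
  A rearrangement inequality gives \<open>\<Sum> b\<^sub>j \<le> 1\<close>, and comparing \<open>b\<^sub>j\<close> with the nearest
  reciprocal \<open>1/k\<close> gives \<open>\<phi>\<^sup>-\<^sup>1(b\<^sub>j)\<^sup>p \<le> M/n + 2 b\<^sub>j M\<close> with
  \<open>M = max\<^sub>k\<^sub>\<le>\<^sub>n k \<phi>\<^sup>-\<^sup>1(1/k)\<^sup>p\<close>; so the sum is at most \<open>3 M c\<^sup>p\<close>.
  For \<open>d(w, q)\<close>, let \<open>r = p/q\<close> and \<open>b\<^sub>j = (x*\<^sub>j)\<^sup>q\<close>, a nonincreasing sequence with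
  \<open>S = \<Sum> b\<^sub>j w\<^sub>j = \<parallel>x\<parallel>\<^sup>q\<close>. If \<open>r \<ge> 1\<close>, then \<open>b\<close> is a convex combination of the extremal vectors
  \<open>(S / W\<^sub>i\<^sub>+\<^sub>1) \<one>\<^bsub>[0, i]\<^esub>\<close> and Jensen's inequality reduces the claim to them; if \<open>r < 1\<close>,
  then \<open>b\<^sub>j \<le> S / W\<^sub>j\<^sub>+\<^sub>1\<close> together with the concavity \<open>k W\<^sub>n \<le> n W\<^sub>k\<close> suffices.
\<close>

section \<open>Orlicz functions\<close>

lemma orlicz_function_zero:
  assumes "orlicz_function \<phi>"
  shows "\<phi> 0 = 0"
proof -
  have cont: "continuous_on {0..} \<phi>" and small: "((\<lambda>x. \<phi> x / x) \<longlongrightarrow> 0) (at_right 0)"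
    using assms by (auto simp: orlicz_function_def)
  have "((\<lambda>x. \<phi> x / x * x) \<longlongrightarrow> 0 * 0) (at_right 0)"
    by (intro tendsto_mult small) (simp add: tendsto_ident_at)
  moreover have "\<forall>\<^sub>F x in at_right 0. \<phi> x / x * x = \<phi> x"
    by (rule eventually_mono[OF eventually_at_right_less]) simp
  ultimately have "(\<phi> \<longlongrightarrow> 0) (at_right 0)"
    by (simp add: Lim_transform_eventually)
  moreover have "(\<phi> \<longlongrightarrow> \<phi> 0) (at_right 0)"
    using cont by (auto simp: continuous_on_def intro: tendsto_within_subset)
  ultimately show ?thesis
    using tendsto_unique[of "at_right 0" \<phi>] by auto
qed

lemma orlicz_function_le_scaled:
  assumes "orlicz_function \<phi>" "0 \<le> x" "x \<le> y" "0 < y"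
  shows "\<phi> x \<le> x / y * \<phi> y"
proof -
  have "convex_on {0..} \<phi>"
    using assms(1) by (simp add: orlicz_function_def)
  then have "\<phi> ((1 - x / y) *\<^sub>R 0 + (x / y) *\<^sub>R y) \<le> (1 - x / y) * \<phi> 0 + x / y * \<phi> y"
    by (rule convex_onD) (use assms in auto)
  then show ?thesis
    using assms orlicz_function_zero[OF assms(1)] by simp
qed

lemma orlicz_function_strict_mono_on:
  assumes "orlicz_function \<phi>"
  shows "strict_mono_on {0..} \<phi>"
proof (rule strict_mono_onI)
  fix x y :: real
  assume "x \<in> {0..}" "x < y"
  moreover from this have "0 < \<phi> y"
    using assms by (simp add: orlicz_function_def)
  ultimately have "x / y * \<phi> y < \<phi> y"
    by (simp add: field_simps)
  then show "\<phi> x < \<phi> y"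
    using orlicz_function_le_scaled[OF assms, of x y] \<open>x \<in> {0..}\<close> \<open>x < y\<close> by simp
qed

lemma orlicz_function_mono:
  assumes "orlicz_function \<phi>" "0 \<le> x" "x \<le> y"
  shows "\<phi> x \<le> \<phi> y"
  using strict_mono_on_less_eq[OF orlicz_function_strict_mono_on[OF assms(1)], of x y] assms(2,3)
  by simp

lemma orlicz_function_nonneg:
  assumes "orlicz_function \<phi>" "0 \<le> x"
  shows "0 \<le> \<phi> x"
  using orlicz_function_mono[OF assms(1) order_refl assms(2)] orlicz_function_zero[OF assms(1)] by simp

lemma orlicz_function_bij_betw:
  assumes "orlicz_function \<phi>"
  shows "bij_betw \<phi> {0..} {0..}"
proof (rule bij_betw_imageI)
  show "inj_on \<phi> {0..}"
    by (rule strict_mono_on_imp_inj_on[OF orlicz_function_strict_mono_on[OF assms]])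
  show "\<phi> ` {0..} = {0..}"
  proof (intro subset_antisym subsetI)
    fix y :: real
    assume "y \<in> {0..}"
    have "\<forall>\<^sub>F x in at_top. 1 \<le> \<phi> x / x"
      using assms by (simp add: orlicz_function_def filterlim_at_top)
    then obtain N where "\<And>x. x \<ge> N \<Longrightarrow> 1 \<le> \<phi> x / x"
      by (auto simp: eventually_at_top_linorder)
    then obtain b where "b \<ge> max y 1" "1 \<le> \<phi> b / b"
      by (meson max.cobounded1 max.cobounded2)
    then have "y \<le> \<phi> b"
      by (simp add: field_simps)
    moreover have "continuous_on {0..b} \<phi>"
      using assms by (auto simp: orlicz_function_def intro: continuous_on_subset)
    ultimately have "\<exists>x\<ge>0. x \<le> b \<and> \<phi> x = y"
      using \<open>y \<in> {0..}\<close> \<open>b \<ge> max y 1\<close> orlicz_function_zero[OF assms] by (intro IVT') auto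
    then show "y \<in> \<phi> ` {0..}"
      by auto
  qed (use orlicz_function_nonneg[OF assms] in auto)
qed

lemma orlicz_inv_nonneg:
  assumes "orlicz_function \<phi>" "0 \<le> y"
  shows "0 \<le> orlicz_inv \<phi> y"
  using bij_betw_apply[OF bij_betw_inv_into[OF orlicz_function_bij_betw[OF assms(1)]]] assms(2)
  by (auto simp: orlicz_inv_def)

lemma orlicz_inv_inverse:
  assumes "orlicz_function \<phi>" "0 \<le> y"
  shows "\<phi> (orlicz_inv \<phi> y) = y"
  using bij_betw_inv_into_right[OF orlicz_function_bij_betw[OF assms(1)]] assms(2)
  by (simp add: orlicz_inv_def)

lemma orlicz_inv_apply:
  assumes "orlicz_function \<phi>" "0 \<le> x"
  shows "orlicz_inv \<phi> (\<phi> x) = x"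
  using bij_betw_inv_into_left[OF orlicz_function_bij_betw[OF assms(1)]] assms(2)
  by (simp add: orlicz_inv_def)

lemma orlicz_inv_mono:
  assumes "orlicz_function \<phi>" "0 \<le> y" "y \<le> y'"
  shows "orlicz_inv \<phi> y \<le> orlicz_inv \<phi> y'"
  using strict_mono_on_less_eq[OF orlicz_function_strict_mono_on[OF assms(1)],
      of "orlicz_inv \<phi> y" "orlicz_inv \<phi> y'"] assms
  by (simp add: orlicz_inv_nonneg orlicz_inv_inverse)

section \<open>Nonincreasing rearrangement\<close>

lemma decr_rearr_candidates_nonempty:
  fixes x :: "nat \<Rightarrow> real"
  assumes "bounded (range x)"
  shows "{t. 0 \<le> t \<and> finite {j. \<bar>x j\<bar> > t} \<and> card {j. \<bar>x j\<bar> > t} \<le> n} \<noteq> {}"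
proof -
  obtain B where B: "\<And>j. \<bar>x j\<bar> \<le> B"
    using assms by (auto simp: bounded_iff)
  then have "{j. \<bar>x j\<bar> > B} = {}"
    by (simp add: not_less)
  moreover have "0 \<le> B"
    using B[of 0] abs_ge_zero[of "x 0"] by linarith
  ultimately have "B \<in> {t. 0 \<le> t \<and> finite {j. \<bar>x j\<bar> > t} \<and> card {j. \<bar>x j\<bar> > t} \<le> n}"
    by simp
  then show ?thesis
    by blast
qed

lemma decr_rearr_candidates_bdd_below:
  "bdd_below {t::real. 0 \<le> t \<and> finite {j. \<bar>x j\<bar> > t} \<and> card {j. \<bar>x j\<bar> > t} \<le> n}"
  by (rule bdd_belowI[of _ 0]) simp

lemma decr_rearr_nonneg:
  assumes "bounded (range x)"
  shows "0 \<le> decr_rearr x n"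
  unfolding decr_rearr_def
  by (rule cInf_greatest[OF decr_rearr_candidates_nonempty[OF assms]]) simp

lemma decr_rearr_le:
  assumes "0 \<le> t" "finite {j. \<bar>x j\<bar> > t}" "card {j. \<bar>x j\<bar> > t} \<le> n"
  shows "decr_rearr x n \<le> t"
  unfolding decr_rearr_def
  by (rule cInf_lower[OF _ decr_rearr_candidates_bdd_below]) (use assms in simp)

lemma decr_rearr_greatest:
  assumes "bounded (range x)"
    and "\<And>t. 0 \<le> t \<Longrightarrow> finite {j. \<bar>x j\<bar> > t} \<Longrightarrow> card {j. \<bar>x j\<bar> > t} \<le> n \<Longrightarrow> a \<le> t"
  shows "a \<le> decr_rearr x n"
  unfolding decr_rearr_def
  by (rule cInf_greatest[OF decr_rearr_candidates_nonempty[OF assms(1)]]) (use assms(2) in simp)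

lemma decr_rearr_antimono:
  assumes "bounded (range x)" "m \<le> n"
  shows "decr_rearr x n \<le> decr_rearr x m"
  unfolding decr_rearr_def
  by (rule cInf_superset_mono[OF decr_rearr_candidates_nonempty[OF assms(1)]
        decr_rearr_candidates_bdd_below]) (use assms(2) in auto)

lemma decr_rearr_indicator:
  assumes "0 < a"
  shows "decr_rearr (\<lambda>i. if i < k then a else 0) j = (if j < k then a else 0)"
proof -
  let ?x = "\<lambda>i::nat. if i < k then a else 0"
  have bounded: "bounded (range ?x)"
    by (rule boundedI[of _ a]) (use assms in auto)
  have below_a: "{i. \<bar>?x i\<bar> > t} = {..<k}" if "0 \<le> t" "t < a" for t
    using that by auto
  show ?thesis
  proof (cases "j < k")
    case True
    have "a \<le> decr_rearr ?x j"
    proof (rule decr_rearr_greatest[OF bounded])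
      fix t
      assume "0 \<le> t" "finite {i. \<bar>?x i\<bar> > t}" "card {i. \<bar>?x i\<bar> > t} \<le> j"
      then show "a \<le> t"
        using below_a[of t] True by (cases "t < a") auto
    qed
    moreover have "decr_rearr ?x j \<le> a"
      by (rule decr_rearr_le) (use assms in auto)
    ultimately show ?thesis
      using True by simp
  next
    case False
    have "decr_rearr ?x j \<le> 0"
      by (rule decr_rearr_le) (use below_a[of 0] assms False in auto)
    then show ?thesis
      using decr_rearr_nonneg[OF bounded, of j] False by simp
  qed
qed

lemma decr_rearr_approx_inj:
  assumes "0 < \<theta>" "\<theta> < 1"
  obtains f where "inj_on f {..<n}"
    "\<And>j. j < n \<Longrightarrow> 0 < decr_rearr x j \<Longrightarrow> \<theta> * decr_rearr x j < \<bar>x (f j)\<bar>"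
proof -
  \<comment> \<open>more than \<open>j\<close> entries of \<open>\<bar>x\<bar>\<close> exceed \<open>\<theta> x*\<^sub>j\<close>, so a fresh index can always be chosen\<close>
  have "\<exists>f. inj_on f {..<n} \<and> (\<forall>j<n. 0 < decr_rearr x j \<longrightarrow> \<theta> * decr_rearr x j < \<bar>x (f j)\<bar>)"
  proof (induction n)
    case (Suc n)
    then obtain f where f: "inj_on f {..<n}"
      "\<forall>j<n. 0 < decr_rearr x j \<longrightarrow> \<theta> * decr_rearr x j < \<bar>x (f j)\<bar>"
      by blast
    let ?F = "f ` {..<n}"
    have "\<exists>i. i \<notin> ?F \<and> (0 < decr_rearr x n \<longrightarrow> \<theta> * decr_rearr x n < \<bar>x i\<bar>)"
    proof (cases "0 < decr_rearr x n")
      case True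
      let ?S = "{j. \<bar>x j\<bar> > \<theta> * decr_rearr x n}"
      have "\<not> decr_rearr x n \<le> \<theta> * decr_rearr x n"
        using True assms by simp
      then have "\<not> (finite ?S \<and> card ?S \<le> n)"
        using decr_rearr_le[of "\<theta> * decr_rearr x n" x n] True assms by auto
      moreover have "card ?F \<le> n"
        using card_image_le[of "{..<n}" f] by simp
      ultimately have "\<not> ?S \<subseteq> ?F"
        using card_mono[of ?F ?S] finite_subset[of ?S ?F] by auto
      then show ?thesis
        using True by blast
    next
      case False
      then show ?thesis
        using ex_new_if_finite[OF infinite_UNIV_nat, of ?F] by blast
    qed
    then obtain i where i: "i \<notin> ?F" "0 < decr_rearr x n \<longrightarrow> \<theta> * decr_rearr x n < \<bar>x i\<bar>"
      by blast
    have "inj_on (f(n := i)) {..<Suc n}"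
      using inj_on_fun_updI[OF f(1) i(1)] i(1) by (simp add: lessThan_Suc)
    moreover have "\<forall>j<Suc n. 0 < decr_rearr x j \<longrightarrow> \<theta> * decr_rearr x j < \<bar>x ((f(n := i)) j)\<bar>"
      using f(2) i(2) by (simp add: less_Suc_eq)
    ultimately show ?case
      by blast
  qed simp
  then show thesis
    using that by blast
qed

lemma sum_decr_rearr_le_suminf:
  fixes x :: "nat \<Rightarrow> real" and g :: "real \<Rightarrow> real"
  assumes bounded: "bounded (range x)" and g0: "0 \<le> g 0" and mono: "mono_on {0..} g"
    and cont: "continuous_on {0..} g" and summable: "summable (\<lambda>i. g \<bar>x i\<bar>)"
  shows "(\<Sum>j<n. g (decr_rearr x j)) \<le> (\<Sum>i. g \<bar>x i\<bar>)"
proof -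
  have g_le: "g s \<le> g t" if "0 \<le> s" "s \<le> t" for s t
    using mono that by (auto intro: mono_onD)
  have shrunk: "(\<Sum>j<n. g (\<theta> * decr_rearr x j)) \<le> (\<Sum>i. g \<bar>x i\<bar>)"
    if \<theta>: "\<theta> \<in> {0<..<1}" for \<theta>
  proof -
    obtain f where f: "inj_on f {..<n}"
      "\<And>j. j < n \<Longrightarrow> 0 < decr_rearr x j \<Longrightarrow> \<theta> * decr_rearr x j < \<bar>x (f j)\<bar>"
      using decr_rearr_approx_inj[of \<theta> n x] \<theta> by auto
    have "(\<Sum>j<n. g (\<theta> * decr_rearr x j)) \<le> (\<Sum>j<n. g \<bar>x (f j)\<bar>)"
    proof (rule sum_mono)
      fix j
      assume "j \<in> {..<n}"
      moreover have "0 \<le> decr_rearr x j"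
        using decr_rearr_nonneg[OF bounded] .
      ultimately show "g (\<theta> * decr_rearr x j) \<le> g \<bar>x (f j)\<bar>"
        using f(2)[of j] \<theta> by (cases "decr_rearr x j = 0") (auto intro!: g_le)
    qed
    also have "\<dots> = (\<Sum>i\<in>f ` {..<n}. g \<bar>x i\<bar>)"
      using sum.reindex[OF f(1), of "\<lambda>i. g \<bar>x i\<bar>"] by simp
    also have "\<dots> \<le> (\<Sum>i. g \<bar>x i\<bar>)"
      using g0 g_le[of 0] by (intro sum_le_suminf[OF summable]) (auto intro: order_trans)
    finally show ?thesis .
  qed
  \<comment> \<open>the estimate for \<open>\<theta> < 1\<close> passes to \<open>\<theta> = 1\<close> by continuity of \<open>g\<close>\<close>
  have "((\<lambda>\<theta>. \<Sum>j<n. g (\<theta> * decr_rearr x j)) \<longlongrightarrow> (\<Sum>j<n. g (1 * decr_rearr x j))) (at_left 1)"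
  proof (intro tendsto_sum continuous_on_tendsto_compose[OF cont])
    fix j
    show "((\<lambda>\<theta>. \<theta> * decr_rearr x j) \<longlongrightarrow> 1 * decr_rearr x j) (at_left 1)"
      by (intro tendsto_intros)
    show "1 * decr_rearr x j \<in> {0..}"
      using decr_rearr_nonneg[OF bounded] by simp
    show "\<forall>\<^sub>F \<theta> in at_left 1. \<theta> * decr_rearr x j \<in> {0..}"
      using eventually_at_left_real[of 0 1] decr_rearr_nonneg[OF bounded, of j]
      by (auto elim!: eventually_mono)
  qed
  then show ?thesis
    using eventually_at_left_real[of 0 1] shrunk
    by (intro tendsto_upperbound) (auto elim!: eventually_mono)
qed

section \<open>The Marcinkiewicz norm\<close>

lemma mseq_term_le_marc_norm: "in_marc \<nu> p x \<Longrightarrow> 1 \<le> n \<Longrightarrow> mseq_term \<nu> p x n \<le> marc_norm \<nu> p x"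
  unfolding in_marc_def marc_norm_def by (intro cSUP_upper) auto

lemma marc_norm_least: "(\<And>n. 1 \<le> n \<Longrightarrow> mseq_term \<nu> p x n \<le> B) \<Longrightarrow> marc_norm \<nu> p x \<le> B"
  unfolding marc_norm_def by (intro cSUP_least) auto

lemma mseq_term_indicator:
  assumes "0 < p" "0 < a" "k \<le> n"
  shows "mseq_term \<nu> p (\<lambda>i. if i < k then a else 0) n = real k powr (1 / p) * a / \<nu> n"
proof -
  have "(\<Sum>j<n. decr_rearr (\<lambda>i. if i < k then a else 0) j powr p)
      = (\<Sum>j<n. if j < k then a powr p else 0)"
    by (intro sum.cong) (simp_all add: decr_rearr_indicator[OF assms(2)])
  also have "\<dots> = (\<Sum>j\<in>{..<n} \<inter> {j. j < k}. a powr p)"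
    by (simp add: sum.If_cases)
  also have "{..<n} \<inter> {j. j < k} = {..<k}"
    using assms(3) by auto
  finally show ?thesis
    using assms(1,2) by (simp add: mseq_term_def powr_mult powr_powr)
qed

lemma embeds_marcI:
  assumes "\<And>x. X x \<Longrightarrow> bounded (range x)"
    and "\<And>x n. X x \<Longrightarrow> 1 \<le> n \<Longrightarrow> mseq_term \<nu> p x n \<le> D * nX x"
  shows "embeds X nX (in_marc \<nu> p) (marc_norm \<nu> p)"
  unfolding embeds_def in_marc_def
  using assms by (intro exI[of _ D]) (auto intro: marc_norm_least simp: bdd_above_def)

lemma embeds_marc_indicator_bound:
  assumes "embeds X nX (in_marc \<nu> p) (marc_norm \<nu> p)" "\<And>x. X x \<Longrightarrow> 0 \<le> nX x"
    and "\<And>n. 1 \<le> n \<Longrightarrow> 0 < \<nu> n" "0 < p"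
  obtains K where "0 < K"
    "\<And>a k n. 0 < a \<Longrightarrow> 1 \<le> k \<Longrightarrow> k \<le> n \<Longrightarrow> X (\<lambda>i. if i < k then a else 0) \<Longrightarrow>
      real k powr (1 / p) * a \<le> K * nX (\<lambda>i. if i < k then a else 0) * \<nu> n"
proof -
  obtain C where C: "\<And>x. X x \<Longrightarrow> in_marc \<nu> p x \<and> marc_norm \<nu> p x \<le> C * nX x"
    using assms(1) by (auto simp: embeds_def)
  have "real k powr (1 / p) * a \<le> max C 1 * nX (\<lambda>i. if i < k then a else 0) * \<nu> n"
    if "0 < a" "1 \<le> k" "k \<le> n" "X (\<lambda>i. if i < k then a else 0)" for a k n
  proof -
    let ?x = "\<lambda>i. if i < k then a else 0"
    have "real k powr (1 / p) * a / \<nu> n = mseq_term \<nu> p ?x n"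
      using mseq_term_indicator[OF assms(4) that(1,3)] by simp
    also have "\<dots> \<le> marc_norm \<nu> p ?x"
      using C that by (intro mseq_term_le_marc_norm) auto
    also have "\<dots> \<le> C * nX ?x"
      using C that(4) by blast
    also have "\<dots> \<le> max C 1 * nX ?x"
      using assms(2) that(4) by (intro mult_right_mono) auto
    finally show ?thesis
      using assms(3)[of n] that by (simp add: divide_le_eq)
  qed
  then show thesis
    using that[of "max C 1"] by auto
qed

lemma root_mult_le_imp_mult_powr_le:
  assumes "0 < p" "0 \<le> a" "real k powr (1 / p) * a \<le> L"
  shows "real k * a powr p \<le> L powr p"
proof -
  have "real k * a powr p = (real k powr (1 / p) * a) powr p"
    using assms(1,2) by (simp add: powr_mult powr_powr)
  also have "\<dots> \<le> L powr p"
    using assms by (intro powr_mono2) auto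
  finally show ?thesis .
qed

lemma mseq_term_le_of_sum_le:
  assumes "0 < p" "0 < \<nu> n" "0 \<le> A" "(\<Sum>j<n. decr_rearr x j powr p) \<le> (A * \<nu> n) powr p"
  shows "mseq_term \<nu> p x n \<le> A"
proof -
  have "(\<Sum>j<n. decr_rearr x j powr p) powr (1 / p) \<le> ((A * \<nu> n) powr p) powr (1 / p)"
    using assms(1,4) by (intro powr_mono2) (auto intro: sum_nonneg)
  also have "\<dots> = A * \<nu> n"
    using assms(1-3) by (simp add: powr_powr)
  finally show ?thesis
    using assms(2) by (simp add: mseq_term_def pos_divide_le_eq)
qed

section \<open>Embedding of Orlicz spaces\<close>

definition luxemburg_admissible :: "(real \<Rightarrow> real) \<Rightarrow> (nat \<Rightarrow> real) \<Rightarrow> real \<Rightarrow> bool" where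
  "luxemburg_admissible \<phi> x c \<longleftrightarrow>
     c > 0 \<and> summable (\<lambda>j. \<phi> (\<bar>x j\<bar> / c)) \<and> (\<Sum>j. \<phi> (\<bar>x j\<bar> / c)) \<le> 1"

lemma in_orlicz_iff: "in_orlicz \<phi> x \<longleftrightarrow> (\<exists>c. luxemburg_admissible \<phi> x c)"
  by (auto simp: in_orlicz_def luxemburg_admissible_def)

lemma orlicz_norm_le: "luxemburg_admissible \<phi> x c \<Longrightarrow> orlicz_norm \<phi> x \<le> c"
  unfolding orlicz_norm_def
  by (rule cInf_lower) (auto simp: luxemburg_admissible_def intro: bdd_belowI[of _ 0])

lemma orlicz_norm_greatest:
  assumes "in_orlicz \<phi> x" "\<And>c. luxemburg_admissible \<phi> x c \<Longrightarrow> B \<le> c"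
  shows "B \<le> orlicz_norm \<phi> x"
  unfolding orlicz_norm_def
  by (rule cInf_greatest) (use assms in \<open>auto simp: in_orlicz_def luxemburg_admissible_def\<close>)

lemma orlicz_norm_nonneg: "in_orlicz \<phi> x \<Longrightarrow> 0 \<le> orlicz_norm \<phi> x"
  by (rule orlicz_norm_greatest) (auto simp: luxemburg_admissible_def)

lemma luxemburg_admissible_le_one:
  assumes "orlicz_function \<phi>" "luxemburg_admissible \<phi> x c"
  shows "\<phi> (\<bar>x i\<bar> / c) \<le> 1"
proof -
  have "\<phi> (\<bar>x i\<bar> / c) \<le> (\<Sum>j. \<phi> (\<bar>x j\<bar> / c))"
    using assms orlicz_function_nonneg[OF assms(1)]
    by (intro sum_le_suminf[of _ "{i}", simplified]) (auto simp: luxemburg_admissible_def)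
  then show ?thesis
    using assms(2) by (simp add: luxemburg_admissible_def)
qed

lemma luxemburg_admissible_bounded:
  assumes "orlicz_function \<phi>" "luxemburg_admissible \<phi> x c"
  shows "bounded (range x)"
proof (rule boundedI)
  fix y
  assume "y \<in> range x"
  then obtain i where "y = x i"
    by auto
  have "\<phi> (\<bar>x i\<bar> / c) \<le> \<phi> (orlicz_inv \<phi> 1)"
    using luxemburg_admissible_le_one[OF assms] orlicz_inv_inverse[OF assms(1), of 1] by simp
  then have "\<bar>x i\<bar> / c \<le> orlicz_inv \<phi> 1"
    using assms(2) strict_mono_on_less_eq[OF orlicz_function_strict_mono_on[OF assms(1)]]
      orlicz_inv_nonneg[OF assms(1), of 1] by (simp add: luxemburg_admissible_def)
  then show "norm y \<le> c * orlicz_inv \<phi> 1"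
    using \<open>y = x i\<close> assms(2) by (simp add: luxemburg_admissible_def field_simps)
qed

lemma nat_floor_inverse_bounds:
  fixes b :: real
  assumes "0 < b" "b \<le> 1"
  shows "1 \<le> nat \<lfloor>1 / b\<rfloor>" "real (nat \<lfloor>1 / b\<rfloor>) \<le> 1 / b" "1 \<le> 2 * b * real (nat \<lfloor>1 / b\<rfloor>)"
proof -
  let ?k = "nat \<lfloor>1 / b\<rfloor>"
  have k: "real ?k = of_int \<lfloor>1 / b\<rfloor>"
    using assms(1) by simp
  have "1 \<le> 1 / b"
    using assms by simp
  then show "1 \<le> ?k" "real ?k \<le> 1 / b"
    using k by linarith+
  have "1 < b * real ?k + b"
    using k real_of_int_floor_add_one_gt[of "1 / b"] assms(1) by (simp add: field_simps)
  moreover have "b \<le> b * real ?k"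
    using assms \<open>1 \<le> ?k\<close> by simp
  ultimately show "1 \<le> 2 * b * real ?k"
    by linarith
qed

lemma le_of_reciprocal_samples:
  fixes \<psi> :: "real \<Rightarrow> real"
  assumes mono: "mono_on {0..} \<psi>" and "0 \<le> M"
    and samples: "\<And>k. 1 \<le> k \<Longrightarrow> k \<le> n \<Longrightarrow> real k * \<psi> (1 / real k) \<le> M"
    and "1 \<le> n" "0 \<le> b" "b \<le> 1"
  shows "\<psi> b \<le> M / real n + 2 * b * M"
proof (cases "b < 1 / real n")
  case True
  then have "\<psi> b \<le> \<psi> (1 / real n)"
    using assms by (intro mono_onD[OF mono]) auto
  also have "\<dots> \<le> M / real n"
    using samples[of n] \<open>1 \<le> n\<close> by (simp add: field_simps)
  finally show ?thesis
    using assms by (simp add: add_increasing2)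
next
  case False
  moreover have "0 < 1 / real n"
    using \<open>1 \<le> n\<close> by simp
  ultimately have "0 < b"
    by linarith
  define k where "k = nat \<lfloor>1 / b\<rfloor>"
  have k: "1 \<le> k" "real k \<le> 1 / b" "1 \<le> 2 * b * real k"
    unfolding k_def using nat_floor_inverse_bounds[OF \<open>0 < b\<close> \<open>b \<le> 1\<close>] by auto
  moreover have "1 / b \<le> real n"
    using False \<open>0 < b\<close> \<open>1 \<le> n\<close> by (auto simp: field_simps not_less)
  ultimately have "k \<le> n"
    by linarith
  have "\<psi> b \<le> \<psi> (1 / real k)"
    using k \<open>0 < b\<close> by (intro mono_onD[OF mono]) (auto simp: field_simps)
  also have "\<dots> \<le> M / real k"
    using samples[OF \<open>1 \<le> k\<close> \<open>k \<le> n\<close>] \<open>1 \<le> k\<close> by (simp add: field_simps)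
  also have "\<dots> \<le> 2 * b * M"
    using mult_left_mono[OF k(3) \<open>0 \<le> M\<close>] \<open>1 \<le> k\<close> by (simp add: field_simps)
  finally show ?thesis
    using assms by (simp add: add_increasing)
qed

lemma sum_le_of_reciprocal_samples:
  fixes \<psi> :: "real \<Rightarrow> real"
  assumes "mono_on {0..} \<psi>" "0 \<le> M"
    and "\<And>k. 1 \<le> k \<Longrightarrow> k \<le> n \<Longrightarrow> real k * \<psi> (1 / real k) \<le> M"
    and "1 \<le> n" "\<And>j. j < n \<Longrightarrow> 0 \<le> b j" "(\<Sum>j<n. b j) \<le> 1"
  shows "(\<Sum>j<n. \<psi> (b j)) \<le> 3 * M"
proof -
  have "b j \<le> 1" if "j < n" for j
    using member_le_sum[of j "{..<n}" b] assms(5,6) that by force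
  then have "(\<Sum>j<n. \<psi> (b j)) \<le> (\<Sum>j<n. M / real n + 2 * b j * M)"
    using assms by (intro sum_mono le_of_reciprocal_samples) auto
  also have "\<dots> = M + 2 * M * (\<Sum>j<n. b j)"
    using assms(4) by (simp add: sum.distrib sum_distrib_left mult_ac)
  also have "\<dots> \<le> 3 * M"
    using assms(2,6) mult_left_mono[of "\<Sum>j<n. b j" 1 "2 * M"] by simp
  finally show ?thesis .
qed

lemma sum_orlicz_decr_rearr_le_one:
  assumes \<phi>: "orlicz_function \<phi>" and adm: "luxemburg_admissible \<phi> x c"
  shows "(\<Sum>j<n. \<phi> (decr_rearr x j / c)) \<le> 1"
proof -
  have bounded: "bounded (range x)"
    by (rule luxemburg_admissible_bounded[OF \<phi> adm])
  have "c > 0"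
    using adm by (simp add: luxemburg_admissible_def)
  have "(\<Sum>j<n. \<phi> (decr_rearr x j / c)) \<le> (\<Sum>i. \<phi> (\<bar>x i\<bar> / c))"
  proof (rule sum_decr_rearr_le_suminf[OF bounded, where g = "\<lambda>s. \<phi> (s / c)"])
    show "mono_on {0..} (\<lambda>s. \<phi> (s / c))"
    proof (rule mono_onI)
      fix s t :: real
      assume "s \<in> {0..}" "s \<le> t"
      then have "0 \<le> s / c" "s / c \<le> t / c"
        using \<open>c > 0\<close> by (simp_all add: divide_right_mono)
      then show "\<phi> (s / c) \<le> \<phi> (t / c)"
        by (rule orlicz_function_mono[OF \<phi>])
    qed
    have "continuous_on {0..} \<phi>"
      using \<phi> by (simp add: orlicz_function_def)
    then show "continuous_on {0..} (\<lambda>s. \<phi> (s / c))"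
      by (rule continuous_on_compose2[where f = "\<lambda>s. s / c"])
        (use \<open>c > 0\<close> in \<open>auto intro: continuous_intros\<close>)
  qed (use adm orlicz_function_zero[OF \<phi>] in \<open>auto simp: luxemburg_admissible_def\<close>)
  also have "\<dots> \<le> 1"
    using adm by (simp add: luxemburg_admissible_def)
  finally show ?thesis .
qed

lemma sum_decr_rearr_powr_le_orlicz:
  assumes \<phi>: "orlicz_function \<phi>" and "0 < p" and adm: "luxemburg_admissible \<phi> x c" and "1 \<le> n"
    and M: "\<And>k. 1 \<le> k \<Longrightarrow> k \<le> n \<Longrightarrow> real k * orlicz_inv \<phi> (1 / real k) powr p \<le> M"
  shows "(\<Sum>j<n. decr_rearr x j powr p) \<le> 3 * M * c powr p"
proof -
  have bounded: "bounded (range x)"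
    by (rule luxemburg_admissible_bounded[OF \<phi> adm])
  have "c > 0"
    using adm by (simp add: luxemburg_admissible_def)
  have "mono_on {0..} (\<lambda>t. orlicz_inv \<phi> t powr p)"
    using \<open>0 < p\<close> orlicz_inv_nonneg[OF \<phi>]
    by (intro mono_onI powr_mono2 orlicz_inv_mono[OF \<phi>]) auto
  moreover have "0 \<le> M"
    using M[of 1] \<open>1 \<le> n\<close> order_trans[OF powr_ge_zero] by simp
  moreover have "0 \<le> \<phi> (decr_rearr x j / c)" for j
    using orlicz_function_nonneg[OF \<phi>] decr_rearr_nonneg[OF bounded] \<open>c > 0\<close> by simp
  ultimately have "(\<Sum>j<n. orlicz_inv \<phi> (\<phi> (decr_rearr x j / c)) powr p) \<le> 3 * M"
    using sum_le_of_reciprocal_samples[where \<psi> = "\<lambda>t. orlicz_inv \<phi> t powr p", OF _ _ M \<open>1 \<le> n\<close> _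
        sum_orlicz_decr_rearr_le_one[OF \<phi> adm]]
    by blast
  moreover have "orlicz_inv \<phi> (\<phi> (decr_rearr x j / c)) = decr_rearr x j / c" for j
    using orlicz_inv_apply[OF \<phi>] decr_rearr_nonneg[OF bounded] \<open>c > 0\<close> by simp
  ultimately have "(\<Sum>j<n. decr_rearr x j powr p) / c powr p \<le> 3 * M"
    using decr_rearr_nonneg[OF bounded] \<open>c > 0\<close> by (simp add: powr_divide sum_divide_distrib)
  then show ?thesis
    using \<open>c > 0\<close> by (simp add: pos_divide_le_eq)
qed

lemma mseq_term_le_orlicz_norm:
  assumes \<phi>: "orlicz_function \<phi>" and "0 < p" and \<nu>: "\<And>n. 1 \<le> n \<Longrightarrow> 0 < \<nu> n" and "0 < K"
    and K: "\<And>k n. 1 \<le> k \<Longrightarrow> k \<le> n \<Longrightarrow> real k powr (1 / p) * orlicz_inv \<phi> (1 / real k) \<le> K * \<nu> n"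
    and x: "in_orlicz \<phi> x" and "1 \<le> n"
  shows "mseq_term \<nu> p x n \<le> 3 powr (1 / p) * K * orlicz_norm \<phi> x"
proof -
  let ?D = "3 powr (1 / p) * K"
  have "0 < ?D"
    using \<open>0 < K\<close> by simp
  have "mseq_term \<nu> p x n \<le> ?D * c" if adm: "luxemburg_admissible \<phi> x c" for c
  proof (rule mseq_term_le_of_sum_le[where \<nu> = \<nu> and n = n, OF \<open>0 < p\<close> \<nu>[OF \<open>1 \<le> n\<close>]])
    have "c > 0"
      using adm by (simp add: luxemburg_admissible_def)
    then show "0 \<le> ?D * c"
      using \<open>0 < ?D\<close> by simp
    have "real k * orlicz_inv \<phi> (1 / real k) powr p \<le> (K * \<nu> n) powr p" if "1 \<le> k" "k \<le> n" for k
      by (rule root_mult_le_imp_mult_powr_le[OF \<open>0 < p\<close> orlicz_inv_nonneg[OF \<phi>] K[OF that]]) simp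
    then have "(\<Sum>j<n. decr_rearr x j powr p) \<le> 3 * (K * \<nu> n) powr p * c powr p"
      by (rule sum_decr_rearr_powr_le_orlicz[OF \<phi> \<open>0 < p\<close> adm \<open>1 \<le> n\<close>])
    also have "\<dots> = (?D * c * \<nu> n) powr p"
      using \<open>0 < p\<close> \<open>0 < K\<close> \<open>c > 0\<close> \<nu>[OF \<open>1 \<le> n\<close>] by (simp add: powr_mult powr_powr mult_ac)
    finally show "(\<Sum>j<n. decr_rearr x j powr p) \<le> (?D * c * \<nu> n) powr p" .
  qed
  then have "mseq_term \<nu> p x n / ?D \<le> orlicz_norm \<phi> x"
    using \<open>0 < ?D\<close> by (intro orlicz_norm_greatest[OF x]) (simp add: pos_divide_le_eq mult_ac)
  then show ?thesis
    using \<open>0 < ?D\<close> by (simp add: pos_divide_le_eq mult_ac)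
qed

lemma orlicz_inv_pos:
  assumes "orlicz_function \<phi>" "0 < y"
  shows "0 < orlicz_inv \<phi> y"
  using orlicz_inv_nonneg[OF assms(1), of y] orlicz_inv_inverse[OF assms(1), of y]
    orlicz_function_zero[OF assms(1)] assms(2)
  by (cases "orlicz_inv \<phi> y = 0") auto

lemma luxemburg_admissible_indicator:
  assumes \<phi>: "orlicz_function \<phi>" and "1 \<le> k"
  shows "luxemburg_admissible \<phi> (\<lambda>i. if i < k then orlicz_inv \<phi> (1 / real k) else 0) 1"
proof -
  have "(\<lambda>j. \<phi> (\<bar>if j < k then orlicz_inv \<phi> (1 / real k) else 0\<bar> / 1))
      = (\<lambda>j. if j \<in> {..<k} then 1 / real k else 0)"
    using orlicz_inv_pos[OF \<phi>, of "1 / real k"] orlicz_inv_inverse[OF \<phi>, of "1 / real k"]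
      orlicz_function_zero[OF \<phi>] \<open>1 \<le> k\<close> by auto
  moreover have "(\<lambda>j. if j \<in> {..<k} then 1 / real k else 0) sums 1"
    using sums_If_finite_set[of "{..<k}" "\<lambda>_. 1 / real k"] \<open>1 \<le> k\<close> by simp
  ultimately show ?thesis
    by (auto simp: luxemburg_admissible_def sums_iff)
qed

lemma embeds_orlicz_marc_iff:
  assumes \<phi>: "orlicz_function \<phi>" and "0 < p" and \<nu>: "\<And>n. 1 \<le> n \<Longrightarrow> 0 < \<nu> n"
  shows "embeds (in_orlicz \<phi>) (orlicz_norm \<phi>) (in_marc \<nu> p) (marc_norm \<nu> p) \<longleftrightarrow>
    (\<exists>K>0. \<forall>k n. 1 \<le> k \<longrightarrow> k \<le> n \<longrightarrow> real k powr (1 / p) * orlicz_inv \<phi> (1 / real k) \<le> K * \<nu> n)"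
proof
  assume emb: "embeds (in_orlicz \<phi>) (orlicz_norm \<phi>) (in_marc \<nu> p) (marc_norm \<nu> p)"
  obtain K where "0 < K" and K: "\<And>a k n. 0 < a \<Longrightarrow> 1 \<le> k \<Longrightarrow> k \<le> n \<Longrightarrow>
      in_orlicz \<phi> (\<lambda>i. if i < k then a else 0) \<Longrightarrow>
      real k powr (1 / p) * a \<le> K * orlicz_norm \<phi> (\<lambda>i. if i < k then a else 0) * \<nu> n"
    using embeds_marc_indicator_bound[OF emb orlicz_norm_nonneg \<nu> \<open>0 < p\<close>] by blast
  have "real k powr (1 / p) * orlicz_inv \<phi> (1 / real k) \<le> K * \<nu> n" if "1 \<le> k" "k \<le> n" for k n
  proof -
    let ?x = "\<lambda>i. if i < k then orlicz_inv \<phi> (1 / real k) else 0"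
    have adm: "luxemburg_admissible \<phi> ?x 1"
      by (rule luxemburg_admissible_indicator[OF \<phi> \<open>1 \<le> k\<close>])
    then have "in_orlicz \<phi> ?x"
      using in_orlicz_iff by blast
    moreover have "0 < orlicz_inv \<phi> (1 / real k)"
      using orlicz_inv_pos[OF \<phi>] \<open>1 \<le> k\<close> by simp
    ultimately have "real k powr (1 / p) * orlicz_inv \<phi> (1 / real k) \<le> K * orlicz_norm \<phi> ?x * \<nu> n"
      using K that by blast
    also have "\<dots> \<le> K * 1 * \<nu> n"
      using orlicz_norm_le[OF adm] \<open>0 < K\<close> \<nu>[of n] that
      by (intro mult_right_mono mult_left_mono) auto
    finally show ?thesis
      by simp
  qed
  then show "\<exists>K>0. \<forall>k n. 1 \<le> k \<longrightarrow> k \<le> n \<longrightarrow> real k powr (1 / p) * orlicz_inv \<phi> (1 / real k) \<le> K * \<nu> n"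
    using \<open>0 < K\<close> by blast
next
  assume "\<exists>K>0. \<forall>k n. 1 \<le> k \<longrightarrow> k \<le> n \<longrightarrow> real k powr (1 / p) * orlicz_inv \<phi> (1 / real k) \<le> K * \<nu> n"
  then obtain K where "0 < K"
    and K: "\<And>k n. 1 \<le> k \<Longrightarrow> k \<le> n \<Longrightarrow> real k powr (1 / p) * orlicz_inv \<phi> (1 / real k) \<le> K * \<nu> n"
    by blast
  show "embeds (in_orlicz \<phi>) (orlicz_norm \<phi>) (in_marc \<nu> p) (marc_norm \<nu> p)"
  proof (rule embeds_marcI)
    show "bounded (range x)" if "in_orlicz \<phi> x" for x
      using that luxemburg_admissible_bounded[OF \<phi>] in_orlicz_iff by blast
    show "mseq_term \<nu> p x n \<le> 3 powr (1 / p) * K * orlicz_norm \<phi> x" if "in_orlicz \<phi> x" "1 \<le> n" for x n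
      by (rule mseq_term_le_orlicz_norm[OF \<phi> \<open>0 < p\<close> \<nu> \<open>0 < K\<close> K that])
  qed
qed

section \<open>Embedding of Lorentz spaces\<close>

lemma convex_on_powr_nonneg:
  assumes "1 \<le> r"
  shows "convex_on {0..} (\<lambda>x::real. x powr r)"
proof (rule convex_onI)
  show "convex {0::real..}"
    by simp
  fix t x y :: real
  assume t: "0 < t" "t < 1" and "x \<in> {0..}" "y \<in> {0..}"
  have shrink: "(s * z) powr r \<le> s * z powr r" if "0 \<le> s" "s \<le> 1" "0 \<le> z" for s z
  proof -
    have "s powr r \<le> s"
      using powr_mono'[of 1 r s] that assms by simp
    then show ?thesis
      using that by (simp add: powr_mult mult_right_mono)
  qed
  consider "x = 0" | "y = 0" | "0 < x" "0 < y"
    using \<open>x \<in> {0..}\<close> \<open>y \<in> {0..}\<close> by force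
  then show "((1 - t) *\<^sub>R x + t *\<^sub>R y) powr r \<le> (1 - t) * x powr r + t * y powr r"
  proof cases
    case 1
    then show ?thesis
      using shrink[of t y] t \<open>y \<in> {0..}\<close> by simp
  next
    case 2
    then show ?thesis
      using shrink[of "1 - t" x] t \<open>x \<in> {0..}\<close> by simp
  next
    case 3
    then show ?thesis
      using t by (intro convex_onD[OF powr_convex[OF assms]]) auto
  qed
qed

definition decrement :: "(nat \<Rightarrow> real) \<Rightarrow> nat \<Rightarrow> nat \<Rightarrow> real" where
  "decrement b n i = b i - (if Suc i < n then b (Suc i) else 0)"

lemma sum_decrement_from:
  assumes "j < n"
  shows "(\<Sum>i<n. if j \<le> i then decrement b n i else 0) = b j"
proof -
  let ?B = "\<lambda>i. if i < n then b i else 0"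
  have "(\<Sum>i<n. if j \<le> i then decrement b n i else 0) = (\<Sum>i\<in>{j..<n}. decrement b n i)"
    by (simp add: sum.If_cases Int_def atLeastLessThan_def conj_commute)
  also have "\<dots> = (\<Sum>i\<in>{j..<n}. (- ?B (Suc i)) - (- ?B i))"
    by (intro sum.cong) (auto simp: decrement_def)
  also have "\<dots> = b j"
    using assms by (subst sum_Suc_diff') simp_all
  finally show ?thesis .
qed

lemma sum_decrement_mult_partial_sums:
  "(\<Sum>i<n. decrement b n i * (\<Sum>j<Suc i. w j)) = (\<Sum>j<n. b j * w j)"
proof -
  have "(\<Sum>i<n. decrement b n i * (\<Sum>j<Suc i. w j))
      = (\<Sum>i<n. \<Sum>j<n. if j \<le> i then decrement b n i * w j else 0)"
    by (intro sum.cong refl) (auto simp: sum_distrib_left sum.If_cases Int_def lessThan_Suc_atMost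
        atMost_def lessThan_def intro!: sum.cong)
  also have "\<dots> = (\<Sum>j<n. (\<Sum>i<n. if j \<le> i then decrement b n i else 0) * w j)"
    by (subst sum.swap) (auto simp: sum_distrib_right intro!: sum.cong)
  also have "\<dots> = (\<Sum>j<n. b j * w j)"
    by (intro sum.cong) (simp_all add: sum_decrement_from)
  finally show ?thesis .
qed

lemma sum_powr_convex_combination_le:
  fixes a :: "'i \<Rightarrow> real" and y :: "'i \<Rightarrow> 'j \<Rightarrow> real"
  assumes "1 \<le> r" "finite I" "I \<noteq> {}" "sum a I = 1" "\<And>i. i \<in> I \<Longrightarrow> 0 \<le> a i"
    and "\<And>i j. i \<in> I \<Longrightarrow> 0 \<le> y i j"
  shows "(\<Sum>j\<in>J. (\<Sum>i\<in>I. a i * y i j) powr r) \<le> (\<Sum>i\<in>I. a i * (\<Sum>j\<in>J. y i j powr r))"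
proof -
  have "(\<Sum>j\<in>J. (\<Sum>i\<in>I. a i * y i j) powr r) \<le> (\<Sum>j\<in>J. \<Sum>i\<in>I. a i * y i j powr r)"
    using convex_on_sum[OF assms(2,3) convex_on_powr_nonneg[OF assms(1)] assms(4)] assms(5,6)
    by (intro sum_mono) simp
  also have "\<dots> = (\<Sum>i\<in>I. a i * (\<Sum>j\<in>J. y i j powr r))"
    by (subst sum.swap) (simp add: sum_distrib_left)
  finally show ?thesis .
qed

lemma sum_powr_le_weighted_sum_ge1:
  fixes b w :: "nat \<Rightarrow> real"
  assumes r: "1 \<le> r" and b: "decseq b" "\<And>j. 0 \<le> b j" and w: "\<And>j. 0 < w j" and "1 \<le> n"
    and M: "\<And>k. 1 \<le> k \<Longrightarrow> k \<le> n \<Longrightarrow> real k * (\<Sum>j<k. w j) powr (- r) \<le> M"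
  shows "(\<Sum>j<n. b j powr r) \<le> (\<Sum>j<n. b j * w j) powr r * M"
proof (cases "(\<Sum>j<n. b j * w j) = 0")
  case True
  then have "\<forall>j\<in>{..<n}. b j * w j = 0"
    using b(2) w by (subst sum_nonneg_eq_0_iff[symmetric]) (auto intro: mult_nonneg_nonneg less_imp_le)
  then show ?thesis
    using w True by (simp add: less_imp_neq[symmetric])
next
  case False
  \<comment> \<open>on \<open>[0, n)\<close>, \<open>b\<close> is the convex combination of the extremal vectors \<open>y i\<close>, which are
    constant \<open>S / W i\<close> on \<open>[0, i]\<close>\<close>
  define S where "S = (\<Sum>j<n. b j * w j)"
  define W where "W i = (\<Sum>j<Suc i. w j)" for i
  define a where "a i = decrement b n i * W i / S" for i
  define y where "y i j = (if j \<le> i then S / W i else 0)" for i j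
  have "0 \<le> S"
    unfolding S_def using b(2) w by (intro sum_nonneg mult_nonneg_nonneg) (auto intro: less_imp_le)
  with False have "0 < S"
    by (simp add: S_def)
  have W: "0 < W i" for i
    unfolding W_def using w by (intro sum_pos) auto
  have a_nonneg: "0 \<le> a i" for i
    using decseqD[OF b(1), of i "Suc i"] b(2) W[of i] \<open>0 < S\<close> by (simp add: a_def decrement_def)
  have a_sum: "(\<Sum>i<n. a i) = 1"
    using sum_decrement_mult_partial_sums[of b n w] \<open>0 < S\<close>
    by (simp add: a_def W_def S_def sum_divide_distrib[symmetric])
  have "b j = (\<Sum>i<n. a i * y i j)" if "j < n" for j
  proof -
    have "a i * y i j = (if j \<le> i then decrement b n i else 0)" for i
      using W[of i] \<open>0 < S\<close> by (simp add: a_def y_def)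
    then show ?thesis
      using sum_decrement_from[OF that, of b] by simp
  qed
  then have "(\<Sum>j<n. b j powr r) = (\<Sum>j<n. (\<Sum>i<n. a i * y i j) powr r)"
    by simp
  also have "\<dots> \<le> (\<Sum>i<n. a i * (\<Sum>j<n. y i j powr r))"
    using \<open>1 \<le> n\<close> a_sum a_nonneg W \<open>0 < S\<close>
    by (intro sum_powr_convex_combination_le[OF r]) (auto simp: y_def less_imp_le)
  also have "\<dots> \<le> (\<Sum>i<n. a i * (S powr r * M))"
  proof (intro sum_mono mult_left_mono a_nonneg)
    fix i
    assume "i \<in> {..<n}"
    have "(\<Sum>j<n. y i j powr r) = (\<Sum>j<Suc i. (S / W i) powr r)"
      using \<open>i \<in> {..<n}\<close> r by (intro sum.mono_neutral_cong_right) (auto simp: y_def)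
    also have "\<dots> = S powr r * (real (Suc i) * W i powr (- r))"
      using \<open>0 < S\<close> W[of i] by (simp add: powr_divide powr_minus_divide)
    also have "\<dots> \<le> S powr r * M"
      using M[of "Suc i"] \<open>i \<in> {..<n}\<close> by (intro mult_left_mono) (auto simp: W_def)
    finally show "(\<Sum>j<n. y i j powr r) \<le> S powr r * M" .
  qed
  also have "\<dots> = S powr r * M"
    using a_sum by (simp add: sum_distrib_right[symmetric])
  finally show ?thesis
    by (simp add: S_def)
qed

lemma powr_neg_le_increment:
  fixes r x :: real
  assumes "0 < r" "r < 1" "0 \<le> x"
  shows "(x + 1) powr (- r) \<le> ((x + 1) powr (1 - r) - x powr (1 - r)) / (1 - r)"
proof (cases "x = 0")
  case True
  then show ?thesis
    using assms by simp
next
  case False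
  have "\<And>t. x \<le> t \<Longrightarrow> t \<le> x + 1 \<Longrightarrow>
      ((\<lambda>t. t powr (1 - r)) has_real_derivative (1 - r) * t powr (- r)) (at t)"
    using False assms(3) by (auto intro!: derivative_eq_intros)
  then obtain z where z: "x < z" "z < x + 1"
    and mvt: "(x + 1) powr (1 - r) - x powr (1 - r) = (x + 1 - x) * ((1 - r) * z powr (- r))"
    using MVT2[of x "x + 1" "\<lambda>t. t powr (1 - r)" "\<lambda>t. (1 - r) * t powr (- r)"] by auto
  have "(x + 1) powr (- r) \<le> z powr (- r)"
    using z False assms by (intro powr_mono2') auto
  then have "(1 - r) * (x + 1) powr (- r) \<le> (x + 1) powr (1 - r) - x powr (1 - r)"
    using mvt assms(2) by simp
  then show ?thesis
    using assms(2) by (simp add: pos_le_divide_eq mult.commute)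
qed

lemma sum_Suc_powr_neg_le:
  fixes r :: real
  assumes "0 < r" "r < 1"
  shows "(\<Sum>j<n. real (Suc j) powr (- r)) \<le> real n powr (1 - r) / (1 - r)"
proof (induction n)
  case (Suc n)
  have "(\<Sum>j<Suc n. real (Suc j) powr (- r)) \<le> real n powr (1 - r) / (1 - r) + real (Suc n) powr (- r)"
    using Suc.IH by simp
  also have "\<dots> \<le> real (Suc n) powr (1 - r) / (1 - r)"
    using powr_neg_le_increment[OF assms, of "real n"] by (simp add: diff_divide_distrib add.commute)
  finally show ?case .
qed simp

lemma decseq_partial_sum_ratio:
  fixes w :: "nat \<Rightarrow> real"
  assumes "decseq w" "1 \<le> k" "k \<le> n"
  shows "real k * (\<Sum>j<n. w j) \<le> real n * (\<Sum>j<k. w j)"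
proof -
  have "(\<Sum>j<n. w j) / real n \<le> (\<Sum>j<k. w j) / real k"
    using assms(3)
  proof (induction n rule: dec_induct)
    case (step m)
    have "(\<Sum>j<m. w m) \<le> (\<Sum>j<m. w j)"
      using assms(1) by (intro sum_mono) (auto simp: decseq_def)
    then have "(\<Sum>j<Suc m. w j) / real (Suc m) \<le> (\<Sum>j<m. w j) / real m"
      using step.hyps assms(2) by (simp add: field_simps)
    then show ?case
      using step.IH by linarith
  qed simp
  then show ?thesis
    using assms(2,3) by (simp add: field_simps)
qed

lemma decseq_mult_partial_sum_le:
  fixes b w :: "nat \<Rightarrow> real"
  assumes "decseq b" "\<And>j. 0 \<le> b j" "\<And>j. 0 \<le> w j" "j < n"
  shows "b j * (\<Sum>i<Suc j. w i) \<le> (\<Sum>i<n. b i * w i)"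
proof -
  have "b j * (\<Sum>i<Suc j. w i) \<le> (\<Sum>i<Suc j. b i * w i)"
    unfolding sum_distrib_left using assms(1,3) by (intro sum_mono mult_right_mono) (auto simp: decseq_def)
  also have "\<dots> \<le> (\<Sum>i<n. b i * w i)"
    using assms(2-4) by (intro sum_mono2) auto
  finally show ?thesis .
qed

lemma sum_powr_le_weighted_sum_lt1:
  fixes b w :: "nat \<Rightarrow> real"
  assumes r: "0 < r" "r < 1" and b: "decseq b" "\<And>j. 0 \<le> b j"
    and w: "decseq w" "\<And>j. 0 < w j" and "1 \<le> n"
  shows "(\<Sum>j<n. b j powr r) \<le> (\<Sum>j<n. b j * w j) powr r * (real n * (\<Sum>j<n. w j) powr (- r)) / (1 - r)"
proof -
  define S where "S = (\<Sum>j<n. b j * w j)"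
  define W where "W = (\<Sum>j<n. w j)"
  have "0 < W"
    unfolding W_def using w(2) \<open>1 \<le> n\<close> by (intro sum_pos) (auto simp: lessThan_empty_iff)
  have "0 \<le> S"
    unfolding S_def using b(2) w(2) by (intro sum_nonneg mult_nonneg_nonneg) (auto intro: less_imp_le)
  define A where "A = S * real n / W"
  \<comment> \<open>\<open>b j \<le> S / (w\<^sub>0 + \<dots> + w\<^sub>j)\<close>, and concavity of the partial sums of \<open>w\<close> gives \<open>b j \<le> A / (j + 1)\<close>\<close>
  have b_le: "b j powr r \<le> A powr r * real (Suc j) powr (- r)" if "j < n" for j
  proof -
    define Wj where "Wj = (\<Sum>i<Suc j. w i)"
    have "0 < Wj"
      unfolding Wj_def using w(2) by (intro sum_pos) auto
    have "real (Suc j) * W \<le> real n * Wj"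
      unfolding W_def Wj_def using w(1) that by (intro decseq_partial_sum_ratio) auto
    then have "b j * (real (Suc j) * W) \<le> b j * (real n * Wj)"
      using b(2)[of j] by (rule mult_left_mono)
    also have "\<dots> = real n * (b j * Wj)"
      by (simp add: mult_ac)
    also have "\<dots> \<le> real n * S"
      unfolding S_def Wj_def using b w(2) that
      by (intro mult_left_mono decseq_mult_partial_sum_le) (auto intro: less_imp_le)
    finally have "b j * (real (Suc j) * W) \<le> S * real n"
      by (simp add: mult.commute)
    then have "b j \<le> A / real (Suc j)"
      using \<open>0 < W\<close> by (simp add: A_def field_simps del: of_nat_Suc)
    then have "b j powr r \<le> (A / real (Suc j)) powr r"
      using b(2) r by (intro powr_mono2) auto
    also have "\<dots> = A powr r * real (Suc j) powr (- r)"
      using \<open>0 \<le> S\<close> \<open>0 < W\<close> by (simp add: A_def powr_divide powr_minus_divide powr_mult del: of_nat_Suc)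
    finally show ?thesis .
  qed
  have "(\<Sum>j<n. b j powr r) \<le> A powr r * (\<Sum>j<n. real (Suc j) powr (- r))"
    unfolding sum_distrib_left using b_le by (intro sum_mono) auto
  also have "\<dots> \<le> A powr r * (real n powr (1 - r) / (1 - r))"
    by (intro mult_left_mono sum_Suc_powr_neg_le r) auto
  also have "\<dots> = S powr r * (real n * W powr (- r)) / (1 - r)"
  proof -
    have "real n powr r * real n powr (1 - r) = real n"
      using \<open>1 \<le> n\<close> by (simp add: powr_add[symmetric])
    then show ?thesis
      using \<open>0 \<le> S\<close> \<open>0 < W\<close>
      by (simp add: A_def powr_divide powr_mult powr_minus_divide field_simps)
  qed
  finally show ?thesis
    by (simp add: S_def W_def)
qed

lemma sum_powr_le_weighted_sum:
  fixes b w :: "nat \<Rightarrow> real"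
  assumes "0 < r" and b: "decseq b" "\<And>j. 0 \<le> b j" and w: "decseq w" "\<And>j. 0 < w j" and "1 \<le> n"
    and M: "\<And>k. 1 \<le> k \<Longrightarrow> k \<le> n \<Longrightarrow> real k * (\<Sum>j<k. w j) powr (- r) \<le> M"
  shows "(\<Sum>j<n. b j powr r) \<le> (if 1 \<le> r then 1 else 1 / (1 - r)) * ((\<Sum>j<n. b j * w j) powr r * M)"
proof (cases "1 \<le> r")
  case True
  then show ?thesis
    using sum_powr_le_weighted_sum_ge1[OF True b w(2) \<open>1 \<le> n\<close> M] by simp
next
  case False
  have "(\<Sum>j<n. b j powr r) \<le> (\<Sum>j<n. b j * w j) powr r * (real n * (\<Sum>j<n. w j) powr (- r)) / (1 - r)"
    using False by (intro sum_powr_le_weighted_sum_lt1[OF \<open>0 < r\<close> _ b w \<open>1 \<le> n\<close>]) simp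
  also have "\<dots> \<le> (\<Sum>j<n. b j * w j) powr r * M / (1 - r)"
    using False M[OF \<open>1 \<le> n\<close> order_refl] by (intro divide_right_mono mult_left_mono) auto
  finally show ?thesis
    using False by simp
qed

lemma mseq_term_le_lorentz_norm:
  assumes "0 < p" "0 < q" and \<nu>: "\<And>n. 1 \<le> n \<Longrightarrow> 0 < \<nu> n"
    and w: "decseq w" "\<And>j. 0 < w j" and "0 \<le> K"
    and K: "\<And>k n. 1 \<le> k \<Longrightarrow> k \<le> n \<Longrightarrow> real k powr (1 / p) * (\<Sum>j<k. w j) powr (- 1 / q) \<le> K * \<nu> n"
    and x: "in_lorentz w q x" and "1 \<le> n"
  shows "mseq_term \<nu> p x n \<le> (if 1 \<le> p / q then 1 else 1 / (1 - p / q)) powr (1 / p) * K * lorentz_norm w q x"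
proof -
  define r where "r = p / q"
  define C where "C = (if 1 \<le> r then 1 else 1 / (1 - r))"
  define b where "b j = decr_rearr x j powr q" for j
  define S where "S = (\<Sum>j. b j * w j)"
  have bounded: "bounded (range x)" and summable: "summable (\<lambda>j. b j * w j)"
    using x by (simp_all add: in_lorentz_def b_def)
  have "0 < r" "0 < C"
    using assms(1,2) by (simp_all add: r_def C_def)
  have b: "decseq b" "\<And>j. 0 \<le> b j"
    unfolding b_def using decr_rearr_antimono[OF bounded] decr_rearr_nonneg[OF bounded] \<open>0 < q\<close>
    by (auto simp: decseq_def intro: powr_mono2)
  have bw_nonneg: "0 \<le> b j * w j" for j
    using b(2) w(2) by (simp add: less_imp_le)
  have "(\<Sum>j<n. b j * w j) \<le> S"
    unfolding S_def using bw_nonneg by (intro sum_le_suminf[OF summable]) auto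
  then have S_le: "(\<Sum>j<n. b j * w j) powr r \<le> S powr r"
    using bw_nonneg \<open>0 < r\<close> by (intro powr_mono2) (auto intro: sum_nonneg)
  have "real k * (\<Sum>j<k. w j) powr (- r) \<le> (K * \<nu> n) powr p" if "1 \<le> k" "k \<le> n" for k
    using root_mult_le_imp_mult_powr_le[OF \<open>0 < p\<close> _ K[OF that]] \<open>0 < q\<close>
    by (simp add: powr_powr r_def)
  then have "(\<Sum>j<n. b j powr r) \<le> C * ((\<Sum>j<n. b j * w j) powr r * (K * \<nu> n) powr p)"
    unfolding C_def by (rule sum_powr_le_weighted_sum[OF \<open>0 < r\<close> b w \<open>1 \<le> n\<close>])
  also have "\<dots> \<le> C * (S powr r * (K * \<nu> n) powr p)"
    using S_le \<open>0 < C\<close> by (intro mult_left_mono mult_right_mono) auto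
  also have "\<dots> = (C powr (1 / p) * K * S powr (1 / q) * \<nu> n) powr p"
    using \<open>0 < p\<close> \<open>0 < q\<close> \<open>0 < C\<close> \<open>0 \<le> K\<close> \<nu>[OF \<open>1 \<le> n\<close>]
    by (simp add: powr_mult powr_powr r_def)
  finally have "(\<Sum>j<n. decr_rearr x j powr p) \<le> (C powr (1 / p) * K * S powr (1 / q) * \<nu> n) powr p"
    using \<open>0 < q\<close> by (simp add: b_def powr_powr r_def)
  then show ?thesis
    using \<open>0 < p\<close> \<nu>[OF \<open>1 \<le> n\<close>] \<open>0 \<le> K\<close>
    by (intro mseq_term_le_of_sum_le) (auto simp: C_def r_def S_def b_def lorentz_norm_def)
qed

lemma lorentz_indicator:
  assumes "0 < q"
  shows "in_lorentz w q (\<lambda>i. if i < k then 1 else 0)"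
    and "lorentz_norm w q (\<lambda>i. if i < k then 1 else 0) = (\<Sum>j<k. w j) powr (1 / q)"
proof -
  let ?x = "\<lambda>i. if i < k then 1 else 0 :: real"
  have "(\<lambda>j. decr_rearr ?x j powr q * w j) = (\<lambda>j. if j \<in> {..<k} then w j else 0)"
    using decr_rearr_indicator[of 1 k] assms by auto
  then have "(\<lambda>j. decr_rearr ?x j powr q * w j) sums (\<Sum>j<k. w j)"
    using sums_If_finite_set[of "{..<k}" w] by simp
  moreover have "bounded (range ?x)"
    by (rule boundedI[of _ 1]) auto
  ultimately show "in_lorentz w q ?x" "lorentz_norm w q ?x = (\<Sum>j<k. w j) powr (1 / q)"
    by (auto simp: in_lorentz_def lorentz_norm_def sums_iff)
qed

lemma embeds_lorentz_marc_iff: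
  assumes "0 < p" "0 < q" and \<nu>: "\<And>n. 1 \<le> n \<Longrightarrow> 0 < \<nu> n" and w: "decseq w" "\<And>j. 0 < w j"
  shows "embeds (in_lorentz w q) (lorentz_norm w q) (in_marc \<nu> p) (marc_norm \<nu> p) \<longleftrightarrow>
    (\<exists>K>0. \<forall>k n. 1 \<le> k \<longrightarrow> k \<le> n \<longrightarrow> real k powr (1 / p) * (\<Sum>j<k. w j) powr (- 1 / q) \<le> K * \<nu> n)"
proof
  assume emb: "embeds (in_lorentz w q) (lorentz_norm w q) (in_marc \<nu> p) (marc_norm \<nu> p)"
  have "0 \<le> lorentz_norm w q x" for x
    by (simp add: lorentz_norm_def)
  then obtain K where "0 < K" and K: "\<And>a k n. 0 < a \<Longrightarrow> 1 \<le> k \<Longrightarrow> k \<le> n \<Longrightarrow>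
      in_lorentz w q (\<lambda>i. if i < k then a else 0) \<Longrightarrow>
      real k powr (1 / p) * a \<le> K * lorentz_norm w q (\<lambda>i. if i < k then a else 0) * \<nu> n"
    using embeds_marc_indicator_bound[OF emb _ \<nu> \<open>0 < p\<close>] by blast
  have "real k powr (1 / p) * (\<Sum>j<k. w j) powr (- 1 / q) \<le> K * \<nu> n" if "1 \<le> k" "k \<le> n" for k n
  proof -
    have "0 < (\<Sum>j<k. w j)"
      using w(2) that(1) by (intro sum_pos) (auto simp: lessThan_empty_iff)
    moreover have "real k powr (1 / p) \<le> K * (\<Sum>j<k. w j) powr (1 / q) * \<nu> n"
      using K[of 1 k n] that lorentz_indicator[OF \<open>0 < q\<close>] by simp
    ultimately show ?thesis
      by (simp add: powr_minus_divide pos_divide_le_eq mult_ac)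
  qed
  then show "\<exists>K>0. \<forall>k n. 1 \<le> k \<longrightarrow> k \<le> n \<longrightarrow> real k powr (1 / p) * (\<Sum>j<k. w j) powr (- 1 / q) \<le> K * \<nu> n"
    using \<open>0 < K\<close> by blast
next
  assume "\<exists>K>0. \<forall>k n. 1 \<le> k \<longrightarrow> k \<le> n \<longrightarrow> real k powr (1 / p) * (\<Sum>j<k. w j) powr (- 1 / q) \<le> K * \<nu> n"
  then obtain K where "0 < K"
    and K: "\<And>k n. 1 \<le> k \<Longrightarrow> k \<le> n \<Longrightarrow> real k powr (1 / p) * (\<Sum>j<k. w j) powr (- 1 / q) \<le> K * \<nu> n"
    by blast
  show "embeds (in_lorentz w q) (lorentz_norm w q) (in_marc \<nu> p) (marc_norm \<nu> p)"
  proof (rule embeds_marcI)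
    show "bounded (range x)" if "in_lorentz w q x" for x
      using that by (simp add: in_lorentz_def)
    show "mseq_term \<nu> p x n \<le> (if 1 \<le> p / q then 1 else 1 / (1 - p / q)) powr (1 / p) * K * lorentz_norm w q x"
      if "in_lorentz w q x" "1 \<le> n" for x n
      using mseq_term_le_lorentz_norm[OF assms(1,2) \<nu> w less_imp_le[OF \<open>0 < K\<close>] K that] .
  qed
qed

section \<open>The limsup criterion\<close>

lemma limsup_Max_ratio_finite_iff:
  fixes f \<nu> :: "nat \<Rightarrow> real"
  assumes \<nu>: "\<And>n. 1 \<le> n \<Longrightarrow> 0 < \<nu> n"
  shows "limsup (\<lambda>n. ereal (Max (f ` {1..n}) / \<nu> n)) < \<infinity> \<longleftrightarrow>
    (\<exists>K>0. \<forall>k n. 1 \<le> k \<longrightarrow> k \<le> n \<longrightarrow> f k \<le> K * \<nu> n)" (is "?lim \<longleftrightarrow> ?bound")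
proof
  assume ?lim
  then obtain C where C: "\<And>n. Max (f ` {1..n}) / \<nu> n \<le> C"
    using limsup_finite_then_bounded[of "\<lambda>n. Max (f ` {1..n}) / \<nu> n"] by blast
  have "f k \<le> max C 1 * \<nu> n" if "1 \<le> k" "k \<le> n" for k n
  proof -
    have "f k \<le> Max (f ` {1..n})"
      using that by (intro Max_ge) auto
    also have "\<dots> \<le> C * \<nu> n"
      using C[of n] \<nu>[of n] that by (simp add: divide_le_eq)
    also have "\<dots> \<le> max C 1 * \<nu> n"
      using \<nu>[of n] that by (intro mult_right_mono) auto
    finally show ?thesis .
  qed
  then show ?bound
    by (intro exI[of _ "max C 1"]) auto
next
  assume ?bound
  then obtain K where K: "\<And>k n. 1 \<le> k \<Longrightarrow> k \<le> n \<Longrightarrow> f k \<le> K * \<nu> n"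
    by blast
  have "\<forall>\<^sub>F n in sequentially. ereal (Max (f ` {1..n}) / \<nu> n) \<le> ereal K"
    unfolding eventually_at_top_linorder
    using K \<nu> by (intro exI[of _ 1]) (auto simp: divide_le_eq)
  then have "limsup (\<lambda>n. ereal (Max (f ` {1..n}) / \<nu> n)) \<le> ereal K"
    by (rule Limsup_bounded)
  then show ?lim
    by (rule order.strict_trans1) simp
qed

theorem corollary7p4:
  fixes p q :: real and \<nu> :: "nat \<Rightarrow> real" and \<phi> :: "real \<Rightarrow> real" and w :: "nat \<Rightarrow> real"
  assumes "1 \<le> p" and "1 \<le> q"
    and "modulus_of_variation \<nu>" and "orlicz_function \<phi>" and "weight_sequence w"
  shows "(embeds (in_orlicz \<phi>) (orlicz_norm \<phi>) (in_marc \<nu> p) (marc_norm \<nu> p) \<longleftrightarrow>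
           limsup (\<lambda>n. ereal (Max ((\<lambda>k. real k powr (1 / p) * orlicz_inv \<phi> (1 / real k)) ` {1..n}) / \<nu> n)) < \<infinity>)
       \<and> (embeds (in_lorentz w q) (lorentz_norm w q) (in_marc \<nu> p) (marc_norm \<nu> p) \<longleftrightarrow>
           limsup (\<lambda>n. ereal (Max ((\<lambda>k. real k powr (1 / p) * (\<Sum>j<k. w j) powr (- 1 / q)) ` {1..n}) / \<nu> n)) < \<infinity>)"
proof -
  \<comment> \<open>only \<open>p, q > 0\<close>, \<open>\<nu> > 0\<close> and \<open>w\<close> positive and nonincreasing are needed\<close>
  have \<nu>: "\<And>n. 1 \<le> n \<Longrightarrow> 0 < \<nu> n"
    using assms(3) by (simp add: modulus_of_variation_def)
  have w: "decseq w" "\<And>j. 0 < w j"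
    using assms(5) by (simp_all add: weight_sequence_def)
  have "0 < p" "0 < q"
    using assms(1,2) by simp_all
  show ?thesis
    by (simp only: \<nu> limsup_Max_ratio_finite_iff embeds_orlicz_marc_iff[OF assms(4) \<open>0 < p\<close>]
        embeds_lorentz_marc_iff[OF \<open>0 < p\<close> \<open>0 < q\<close> _ w] simp_thms)
qed

end
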